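(* Let $\mathcal{K}\subset\mathbb{R}^{d_x}$ be a compact domain and suppose $d_y=d_x+1$. Then there exists a continuous function $f^*\in C(\mathcal{K},\mathbb{R}^{d_y})$ and $\varepsilon>0$ such that for every matrix $W_1\in\mathbb{R}^{d_y\times d_x}$, every $b_1\in\mathbb{R}^{d_y}$ and every homeomorphism $\psi:\mathbb{R}^{d_y}\to\mathbb{R}^{d_y}$, $\sup_{x\in\mathcal{K}}\|\psi(W_1x+b_1)-f^*(x)\|\ge\varepsilon$; i.e., $f^*$ cannot be uniformly approximated on $\mathcal{K}$ by functions of the form $x\mapsto\psi(W_1x+b_1)$.
   Context: $\|\cdot\|$ is the Euclidean norm. *)

theory Defs
  imports "HOL-Analysis.Analysis"
begin

end

theory Submission
  imports Defs
begin

text \<open>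
  Choose two disjoint balls \<open>B\<^sub>1 = cball c r\<close> and \<open>B\<^sub>2 = cball c' r\<close> in \<open>K\<close> and identify the
  target space isometrically with \<open>\<real>\<^sup>d\<^sup>x \<times> \<real>\<close>. Let \<open>f\<close> be \<open>x - c\<close> in the first factor on
  \<open>B\<^sub>1\<close> and a linear ramp in the second factor on \<open>B\<^sub>2\<close>. Then every \<open>y\<close> of norm at most \<open>r\<close>
  is a difference \<open>f x\<^sub>1 - f x\<^sub>2\<close> with \<open>x\<^sub>i \<in> B\<^sub>i\<close> depending continuously on \<open>y\<close>. If
  \<open>g = \<psi> \<circ> A\<close> with \<open>A\<close> affine were \<open>r/2\<close>-close to \<open>f\<close>, the map \<open>y \<mapsto> g x\<^sub>1 - g x\<^sub>2\<close> would move
  no point of the \<open>r\<close>-ball by \<open>r\<close> or more, so by Brouwer it has a zero: \<open>g\<close>, hence \<open>A\<close>,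
  identifies a point of \<open>B\<^sub>1\<close> with one of \<open>B\<^sub>2\<close>. But then the linear part of \<open>A\<close> has a
  kernel, so \<open>g (c + u) = g (c - u)\<close> for some \<open>u\<close> of norm \<open>r\<close>, whereas \<open>f\<close> separates these
  two points by \<open>2 r\<close>.
\<close>

definition cutoff :: "real \<Rightarrow> 'a::metric_space \<Rightarrow> 'a \<Rightarrow> real" where
  "cutoff r c x = max 0 (min 1 (2 - dist x c / r))"

lemma continuous_on_cutoff [continuous_intros]: "continuous_on S (cutoff r c)"
  unfolding cutoff_def divide_inverse by (intro continuous_intros)

lemma cutoff_eq_1: "0 < r \<Longrightarrow> dist x c \<le> r \<Longrightarrow> cutoff r c x = 1"
  by (simp add: cutoff_def field_simps)

lemma cutoff_eq_0: "0 < r \<Longrightarrow> 2 * r \<le> dist x c \<Longrightarrow> cutoff r c x = 0"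
  by (simp add: cutoff_def field_simps)

definition two_ball_map ::
    "('a \<times> real \<Rightarrow> 'b) \<Rightarrow> 'a \<Rightarrow> real \<Rightarrow> 'a \<Rightarrow> 'a \<Rightarrow> 'a::real_inner \<Rightarrow> 'b" where
  "two_ball_map L e r c c' x = L (cutoff r c x *\<^sub>R (x - c), cutoff r c' x * inner (x - c') e)"

lemma continuous_on_two_ball_map:
  fixes L :: "'a::euclidean_space \<times> real \<Rightarrow> 'b::real_normed_vector"
  assumes "linear L"
  shows "continuous_on S (two_ball_map L e r c c')"
proof -
  have "continuous_on UNIV L"
    using assms by (simp add: linear_continuous_on linear_conv_bounded_linear)
  show ?thesis
    unfolding two_ball_map_def
    by (intro continuous_on_compose2[OF \<open>continuous_on UNIV L\<close>] continuous_intros subset_UNIV)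
qed

lemma two_ball_map_first:
  assumes "0 < r" "3 * r \<le> dist c c'" "x \<in> cball c r"
  shows "two_ball_map L e r c c' x = L (x - c, 0)"
proof -
  have "2 * r \<le> dist x c'"
    using assms dist_triangle[of c c' x] by (simp add: dist_commute)
  then show ?thesis
    using assms by (simp add: two_ball_map_def cutoff_eq_0 cutoff_eq_1 dist_commute)
qed

lemma two_ball_map_second:
  assumes "0 < r" "3 * r \<le> dist c c'" "x \<in> cball c' r"
  shows "two_ball_map L e r c c' x = L (0, inner (x - c') e)"
proof -
  have "2 * r \<le> dist x c"
    using assms dist_triangle[of c' c x] by (simp add: dist_commute)
  then show ?thesis
    using assms by (simp add: two_ball_map_def cutoff_eq_0 cutoff_eq_1 dist_commute)
qed

lemma norm_diff_diff_less:
  fixes f1 f2 g1 g2 :: "'a::real_normed_vector"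
  assumes "norm (g1 - f1) < r / 2" "norm (g2 - f2) < r / 2"
  shows "norm ((g1 - g2) - (f1 - f2)) < r"
proof -
  have "norm ((g1 - g2) - (f1 - f2)) \<le> norm (g1 - f1) + norm (g2 - f2)"
    using norm_triangle_ineq4[of "g1 - f1" "g2 - f2"] by (simp add: algebra_simps)
  with assms show ?thesis by linarith
qed

lemma inj_linear_if_close_to_expanding:
  fixes W :: "'a::real_normed_vector \<Rightarrow> 'c::real_vector"
    and F :: "'a \<Rightarrow> 'b::real_normed_vector"
  assumes "linear W" "0 < r"
    and close: "\<And>x. x \<in> cball c r \<Longrightarrow> norm (\<psi> (W x + b) - F x) < r / 2"
    and expanding: "\<And>u. norm u = r \<Longrightarrow> r \<le> norm (F (c + u) - F (c - u))"
  shows "inj W"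
  unfolding linear_injective_0[OF \<open>linear W\<close>]
proof (intro allI impI, rule ccontr)
  fix v assume "W v = 0" "v \<noteq> 0"
  define u where "u = (r / norm v) *\<^sub>R v"
  have "norm u = r"
    using \<open>v \<noteq> 0\<close> \<open>0 < r\<close> by (simp add: u_def)
  then have "c + u \<in> cball c r" "c - u \<in> cball c r"
    by (auto simp: dist_norm)
  moreover have "W (c + u) = W (c - u)"
    using \<open>W v = 0\<close> \<open>linear W\<close> by (simp add: u_def linear_add linear_diff linear_scale)
  ultimately have "norm (F (c + u) - F (c - u)) < r"
    using norm_diff_diff_less[OF close close] by fastforce
  with expanding[OF \<open>norm u = r\<close>] show False
    by linarith
qed

lemma close_maps_collide:
  fixes F G :: "'a::topological_space \<Rightarrow> 'b::euclidean_space"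
  assumes "0 < r"
    and p: "continuous_on (cball 0 r) p" "p ` cball 0 r \<subseteq> S"
    and q: "continuous_on (cball 0 r) q" "q ` cball 0 r \<subseteq> S"
    and G: "continuous_on S G"
    and diff: "\<And>y. y \<in> cball 0 r \<Longrightarrow> F (p y) - F (q y) = y"
    and close: "\<And>x. x \<in> S \<Longrightarrow> norm (G x - F x) < r / 2"
  shows "\<exists>y\<in>cball 0 r. G (p y) = G (q y)"
proof -
  have "\<exists>y\<in>cball 0 r. G (p y) - G (q y) = 0"
  proof (rule brouwer_surjective_cball[where f = "\<lambda>y. G (p y) - G (q y)" and S = "{0}"])
    show "continuous_on (cball 0 r) (\<lambda>y. G (p y) - G (q y))"
      by (intro continuous_on_diff continuous_on_compose2[OF G p] continuous_on_compose2[OF G q])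
    fix z y :: 'b assume "z \<in> {0}" and y: "y \<in> cball 0 r"
    have "norm ((G (p y) - G (q y)) - (F (p y) - F (q y))) < r"
      using p q y by (intro norm_diff_diff_less close) auto
    then have "norm (y - (G (p y) - G (q y))) \<le> r"
      using diff[OF y] by (simp add: norm_minus_commute)
    with \<open>z \<in> {0}\<close> show "z + (y - (G (p y) - G (q y))) \<in> cball 0 r"
      by simp
  qed (use \<open>0 < r\<close> in auto)
  then show ?thesis
    by simp
qed

lemma two_ball_map_not_approximable:
  fixes L :: "'a::euclidean_space \<times> real \<Rightarrow> 'b::euclidean_space"
    and W :: "'a \<Rightarrow> 'c::real_normed_vector" and \<psi> :: "'c \<Rightarrow> 'b"
  assumes L: "linear L" "linear L'" "\<And>v. norm (L v) = norm v" "\<And>y. L (L' y) = y"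
    and "norm e = 1" "0 < r" "dist c c' = 3 * r"
    and "linear W" "continuous_on UNIV \<psi>" "inj \<psi>"
  shows "\<exists>x \<in> cball c r \<union> cball c' r. r / 2 \<le> norm (\<psi> (W x + b) - two_ball_map L e r c c' x)"
proof (rule ccontr)
  define F where "F = two_ball_map L e r c c'"
  define B where "B = cball c r \<union> cball c' r"
  assume "\<not> ?thesis"
  then have close: "norm (\<psi> (W x + b) - F x) < r / 2" if "x \<in> B" for x
    using that by (force simp: F_def B_def)
  have F1: "F x = L (x - c, 0)" if "x \<in> cball c r" for x
    using that \<open>0 < r\<close> \<open>dist c c' = 3 * r\<close> by (simp add: F_def two_ball_map_first)
  have F2: "F x = L (0, inner (x - c') e)" if "x \<in> cball c' r" for x
    using that \<open>0 < r\<close> \<open>dist c c' = 3 * r\<close> by (simp add: F_def two_ball_map_second)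
  have "inj W"
  proof (rule inj_linear_if_close_to_expanding[OF \<open>linear W\<close> \<open>0 < r\<close>])
    show "norm (\<psi> (W x + b) - F x) < r / 2" if "x \<in> cball c r" for x
      using close that by (simp add: B_def)
    show "r \<le> norm (F (c + u) - F (c - u))" if "norm u = r" for u
    proof -
      have "F (c + u) - F (c - u) = L (u, 0) - L (- u, 0)"
        using that by (simp add: F1 dist_norm)
      also have "\<dots> = L (2 *\<^sub>R u, 0)"
        using linear_diff[OF L(1), of "(u, 0)" "(- u, 0)"] by (simp add: scaleR_2)
      finally show ?thesis
        using that \<open>0 < r\<close> by (simp add: L(3))
    qed
  qed
  define p where "p y = c + fst (L' y)" for y
  define q where "q y = c' - snd (L' y) *\<^sub>R e" for y
  have norm_L': "norm (L' y) = norm y" for y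
    by (metis L(3,4))
  have pq_balls: "p y \<in> cball c r" "q y \<in> cball c' r" if "y \<in> cball 0 r" for y
    using that norm_fst_le[of "fst (L' y)" "snd (L' y)"] norm_snd_le[of "snd (L' y)" "fst (L' y)"]
    by (auto simp: p_def q_def dist_norm norm_L' \<open>norm e = 1\<close>)
  have contL': "continuous_on S L'" for S
    using L(2) by (simp add: linear_continuous_on linear_conv_bounded_linear)
  have contW: "continuous_on T W" for T
    using \<open>linear W\<close> by (simp add: linear_continuous_on linear_conv_bounded_linear)
  have cont: "continuous_on (cball 0 r) p" "continuous_on (cball 0 r) q"
    "continuous_on B (\<lambda>x. \<psi> (W x + b))"
    unfolding p_def q_def
    by (intro continuous_intros contL' contW
          continuous_on_compose2[OF \<open>continuous_on UNIV \<psi>\<close>] subset_UNIV)+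
  have diff: "F (p y) - F (q y) = y" if "y \<in> cball 0 r" for y
  proof -
    have "inner (q y - c') e = - snd (L' y)"
      using \<open>norm e = 1\<close> by (simp add: q_def inner_commute norm_eq_1)
    then have "F (p y) - F (q y) = L (fst (L' y), 0) - L (0, - snd (L' y))"
      using pq_balls[OF that] by (simp add: F1 F2 p_def)
    also have "\<dots> = L (L' y)"
      by (simp add: linear_diff[OF L(1), symmetric])
    finally show ?thesis
      by (simp add: L(4))
  qed
  have "p ` cball 0 r \<subseteq> B" "q ` cball 0 r \<subseteq> B"
    using pq_balls by (auto simp: B_def)
  then obtain y where "y \<in> cball 0 r" "\<psi> (W (p y) + b) = \<psi> (W (q y) + b)"
    using close_maps_collide[OF \<open>0 < r\<close> cont(1) _ cont(2) _ cont(3) diff close] by blast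
  then have "W (p y) = W (q y)"
    using injD[OF \<open>inj \<psi>\<close>] by fastforce
  then have "p y = q y"
    using injD[OF \<open>inj W\<close>] by blast
  then have "dist c (p y) \<le> r" "dist c' (p y) \<le> r"
    using pq_balls[OF \<open>y \<in> cball 0 r\<close>] by simp_all
  then show False
    using dist_triangle2[of c c' "p y"] \<open>0 < r\<close> \<open>dist c c' = 3 * r\<close> by linarith
qed

theorem exists_not_approximable_by_injective_after_affine:
  fixes K :: "'a::euclidean_space set"
  assumes "interior K \<noteq> {}" and "DIM('b::euclidean_space) = DIM('a) + 1"
  obtains f :: "'a \<Rightarrow> 'b::euclidean_space" and \<epsilon> where "continuous_on UNIV f" "0 < \<epsilon>"
    "\<And>W (b :: 'c::real_normed_vector) \<psi>. linear W \<Longrightarrow> continuous_on UNIV \<psi> \<Longrightarrow> inj \<psi> \<Longrightarrow>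
       \<exists>x\<in>K. \<epsilon> \<le> norm (\<psi> (W x + b) - f x)"
proof -
  obtain c \<delta> where "0 < \<delta>" "ball c \<delta> \<subseteq> K"
    using assms(1) by (auto simp: mem_interior)
  define r where "r = \<delta> / 5"
  obtain e :: 'a where "e \<in> Basis"
    by (meson ex_in_conv nonempty_Basis)
  define c' where "c' = c + (3 * r) *\<^sub>R e"
  have "0 < r" "norm e = 1" "dist c c' = 3 * r"
    using \<open>0 < \<delta>\<close> \<open>e \<in> Basis\<close> by (simp_all add: r_def c'_def dist_norm)
  have "cball c r \<union> cball c' r \<subseteq> K"
  proof
    fix x assume "x \<in> cball c r \<union> cball c' r"
    then have "dist c x < \<delta>"
      using dist_triangle[of c x c'] \<open>dist c c' = 3 * r\<close> \<open>0 < r\<close>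
      by (auto simp: r_def dist_commute)
    then show "x \<in> K"
      using \<open>ball c \<delta> \<subseteq> K\<close> by auto
  qed
  obtain L :: "'a \<times> real \<Rightarrow> 'b" and L' where L:
    "linear L" "linear L'" "\<And>v. norm (L v) = norm v" "\<And>y. L (L' y) = y"
  proof (rule isomorphisms_UNIV_UNIV)
    show "DIM('a \<times> real) = DIM('b)"
      using assms(2) by simp
  qed (blast intro: that)
  show thesis
  proof (rule that)
    show "continuous_on UNIV (two_ball_map L e r c c')"
      using \<open>linear L\<close> by (rule continuous_on_two_ball_map)
    show "0 < r / 2"
      using \<open>0 < r\<close> by simp
    fix W :: "'a \<Rightarrow> 'c" and b :: 'c and \<psi> :: "'c \<Rightarrow> 'b"
    assume "linear W" "continuous_on UNIV \<psi>" "inj \<psi>"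
    then show "\<exists>x\<in>K. r / 2 \<le> norm (\<psi> (W x + b) - two_ball_map L e r c c' x)"
      using two_ball_map_not_approximable[OF L \<open>norm e = 1\<close> \<open>0 < r\<close> \<open>dist c c' = 3 * r\<close>]
        \<open>cball c r \<union> cball c' r \<subseteq> K\<close> by blast
  qed
qed

theorem lemma4p1:
  fixes K :: "(real^'n) set"
  assumes "compact K" and "interior K \<noteq> {}"
    and "CARD('m) = CARD('n) + 1"
  shows "\<exists>(f::real^'n \<Rightarrow> real^'m) \<epsilon>. continuous_on K f \<and> \<epsilon> > 0 \<and>
           (\<forall>(W1::real^'n^'m) (b1::real^'m) (\<psi>::real^'m \<Rightarrow> real^'m).
              (\<exists>\<phi>. homeomorphism UNIV UNIV \<psi> \<phi>) \<longrightarrow>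
              (SUP x\<in>K. norm (\<psi> (W1 *v x + b1) - f x)) \<ge> \<epsilon>)"
proof -
  obtain f :: "real^'n \<Rightarrow> real^'m" and \<epsilon> where f: "continuous_on UNIV f" "0 < \<epsilon>"
    and far: "\<And>W (b :: real^'m) \<psi>. linear W \<Longrightarrow> continuous_on UNIV \<psi> \<Longrightarrow> inj \<psi> \<Longrightarrow>
       \<exists>x\<in>K. \<epsilon> \<le> norm (\<psi> (W x + b) - f x)"
  proof (rule exists_not_approximable_by_injective_after_affine[OF assms(2)])
    show "DIM(real^'m) = DIM(real^'n) + 1"
      using assms(3) by simp
  qed (rule that)
  have "\<epsilon> \<le> (SUP x\<in>K. norm (\<psi> (W1 *v x + b1) - f x))"
    if "homeomorphism UNIV UNIV \<psi> \<phi>" for W1 :: "real^'n^'m" and b1 \<psi> \<phi>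
  proof -
    have "continuous_on UNIV \<psi>" "inj \<psi>"
      using that by (auto simp: homeomorphism_def intro: inj_on_inverseI)
    then obtain x where x: "x \<in> K" "\<epsilon> \<le> norm (\<psi> (W1 *v x + b1) - f x)"
      using far[of "(*v) W1" \<psi> b1] by auto
    have "continuous_on K (\<lambda>x. norm (\<psi> (W1 *v x + b1) - f x))"
      by (intro continuous_intros continuous_on_compose2[OF \<open>continuous_on UNIV \<psi>\<close>]
            continuous_on_subset[OF f(1)] subset_UNIV)
    then have "bdd_above ((\<lambda>x. norm (\<psi> (W1 *v x + b1) - f x)) ` K)"
      by (intro bounded_imp_bdd_above compact_imp_bounded compact_continuous_image assms(1))
    then show ?thesis
      using x by (rule cSUP_upper2)
  qed
  then show ?thesis
    using f continuous_on_subset by blast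
qed

end
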